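(* Let $s\le k$ be positive integers and let $\tau_1,\dots,\tau_k\in[0,1]$ be distinct abscissae. Let $\ell_j$, $j=1,\dots,k$, be the Lagrange polynomials of degree $k-1$ on the nodes $\{\tau_i\}$, and let $\mathcal A=(\alpha_{ij})\in\mathbb R^{k\times k}$ with $\alpha_{ij}=\int_0^{\tau_i}\ell_j(x)\,\mathrm{d}x$ and $\omega_j=\int_0^1\ell_j(x)\,\mathrm{d}x$ (so $(\tau,\mathcal A,\omega)$ is the $k$-stage collocation Runge-Kutta method at these nodes). Let $P_j(t)=\sqrt{2j-1}\,\hat P_{j-1}(t)$, where $\hat P_{j-1}$ is the shifted Legendre polynomial of degree $j-1$ on $[0,1]$, let $\Omega=\mathrm{diag}(\omega_1,\dots,\omega_k)$, and let $\mathcal P_s,\mathcal I_s\in\mathbb R^{k\times s}$ have entries $(\mathcal P_s)_{ij}=P_j(\tau_i)$ and $(\mathcal I_s)_{ij}=\int_0^{\tau_i}P_j(x)\,\mathrm{d}x$. Suppose that the quadrature formula with nodes $\tau_i$ and weights $\omega_i$ is exact for polynomials of degree at least $2s-1$. Then the Runge-Kutta method with abscissae $\tau_1,\dots,\tau_k$, weights $\omega_1,\dots,\omega_k$ and Butcher matrix $A=\mathcal A\,\mathcal P_s\,\mathcal P_s^T\,\Omega$ is the HBVM$(k,s)$ method based at the abscissae $\{\tau_i\}$, i.e. $\mathcal A\,\mathcal P_s\,\mathcal P_s^T\,\Omega=\mathcal I_s\,\mathcal P_s^T\,\Omega$.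
   Context: HBVM$(k,s)$ (Hamiltonian Boundary Value Method with $k$ steps and degree $s$) based at abscissae $\tau_1,\dots,\tau_k$ with weights $\omega_1,\dots,\omega_k$ is the Runge-Kutta method whose Butcher tableau has abscissae $\tau_i$, weights $\omega_i$, and Butcher matrix $\mathcal I_s\,\mathcal P_s^T\,\Omega$, with $\mathcal I_s,\mathcal P_s,\Omega$ as defined in the claim. *)

theory Defs
  imports "HOL-Analysis.Analysis" "HOL-Computational_Algebra.Polynomial" "Jordan_Normal_Form.Matrix"
begin

text \<open>Indices are 0-based: nodes tau 0, ..., tau (k-1).\<close>

definition lagrange_basis :: "(nat \<Rightarrow> real) \<Rightarrow> nat \<Rightarrow> nat \<Rightarrow> real \<Rightarrow> real" where
  "lagrange_basis tau k j x = (\<Prod>m\<in>{0..<k} - {j}. (x - tau m) / (tau j - tau m))"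

text \<open>Shifted Legendre polynomial of degree n on [0,1] (normalised by value 1 at t = 1).\<close>
definition shifted_legendre :: "nat \<Rightarrow> real \<Rightarrow> real" where
  "shifted_legendre n t = (\<Sum>m\<le>n. (-1)^(n+m) * real (n choose m) * real ((n+m) choose m) * t^m)"

text \<open>Orthonormal basis: legP n = P_(n+1) in the paper's 1-based notation.\<close>
definition legP :: "nat \<Rightarrow> real \<Rightarrow> real" where
  "legP n t = sqrt (2 * real n + 1) * shifted_legendre n t"

definition coll_A :: "(nat \<Rightarrow> real) \<Rightarrow> nat \<Rightarrow> real mat" where
  "coll_A tau k = mat k k (\<lambda>(i,j). integral {0..tau i} (lagrange_basis tau k j))"

definition quad_weight :: "(nat \<Rightarrow> real) \<Rightarrow> nat \<Rightarrow> nat \<Rightarrow> real" where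
  "quad_weight tau k j = integral {0..1} (lagrange_basis tau k j)"

definition Omega_mat :: "(nat \<Rightarrow> real) \<Rightarrow> nat \<Rightarrow> real mat" where
  "Omega_mat tau k = mat k k (\<lambda>(i,j). if i = j then quad_weight tau k j else 0)"

definition P_mat :: "(nat \<Rightarrow> real) \<Rightarrow> nat \<Rightarrow> nat \<Rightarrow> real mat" where
  "P_mat tau k s = mat k s (\<lambda>(i,j). legP j (tau i))"

definition I_mat :: "(nat \<Rightarrow> real) \<Rightarrow> nat \<Rightarrow> nat \<Rightarrow> real mat" where
  "I_mat tau k s = mat k s (\<lambda>(i,j). integral {0..tau i} (legP j))"

end

theory Submission
  imports Defs
begin

text \<open>Every polynomial of degree below k coincides with its Lagrange interpolant on the k
distinct nodes, so the collocation matrix \<open>\<A>\<close> integrates it exactly from 0 to each node.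
The columns of \<open>\<P>\<^sub>s\<close> are the node values of such polynomials (s \<le> k), whence
\<open>\<A> \<P>\<^sub>s = \<I>\<^sub>s\<close>, and the claimed identity follows by right multiplication with
\<open>\<P>\<^sub>s\<^sup>T \<Omega>\<close>.\<close>

definition lagrange_basis_poly :: "(nat \<Rightarrow> real) \<Rightarrow> nat \<Rightarrow> nat \<Rightarrow> real poly" where
  "lagrange_basis_poly tau k j =
     (\<Prod>m\<in>{0..<k} - {j}. [:- tau m / (tau j - tau m), 1 / (tau j - tau m):])"

lemma poly_lagrange_basis_poly [simp]:
  "poly (lagrange_basis_poly tau k j) = lagrange_basis tau k j"
  unfolding lagrange_basis_poly_def lagrange_basis_def poly_prod fun_eq_iff
  by (auto intro!: prod.cong simp: diff_divide_distrib)

lemma degree_lagrange_basis_poly: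
  assumes "j < k"
  shows "degree (lagrange_basis_poly tau k j) \<le> k - 1"
proof -
  have "degree (lagrange_basis_poly tau k j)
      \<le> sum (degree \<circ> (\<lambda>m. [:- tau m / (tau j - tau m), 1 / (tau j - tau m):]))
            ({0..<k} - {j})"
    unfolding lagrange_basis_poly_def by (rule degree_prod_sum_le) auto
  also have "\<dots> \<le> (\<Sum>m\<in>{0..<k} - {j}. 1)"
    by (intro sum_mono) auto
  also have "\<dots> = card ({0..<k} - {j})"
    by simp
  finally show ?thesis
    using assms by simp
qed

lemma lagrange_basis_at_node:
  assumes "inj_on tau {..<k}" and "i < k" and "j < k"
  shows "lagrange_basis tau k j (tau i) = (if i = j then 1 else 0)"
proof (cases "i = j")
  case True
  have "(tau i - tau m) / (tau j - tau m) = 1" if "m \<in> {0..<k} - {j}" for m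
  proof -
    have "tau j \<noteq> tau m"
      using assms that by (auto dest: inj_onD)
    then show ?thesis
      using True by simp
  qed
  then show ?thesis
    using True unfolding lagrange_basis_def by simp
next
  case False
  then have "i \<in> {0..<k} - {j}"
    using assms by auto
  then have "(\<Prod>m\<in>{0..<k} - {j}. (tau i - tau m) / (tau j - tau m)) = 0"
    by (intro prod_zero) auto
  then show ?thesis
    using False unfolding lagrange_basis_def by simp
qed

lemma lagrange_interpolation:
  fixes p :: "real poly"
  assumes inj: "inj_on tau {..<k}" and deg: "degree p < k"
  shows "poly p x = (\<Sum>l<k. poly p (tau l) * lagrange_basis tau k l x)"
proof -
  define q where "q = (\<Sum>l<k. Polynomial.smult (poly p (tau l)) (lagrange_basis_poly tau k l))"
  have degree_q: "degree q \<le> k - 1"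
    unfolding q_def
    by (intro degree_sum_le order.trans[OF degree_smult_le] degree_lagrange_basis_poly) auto
  have agree: "poly p y = poly q y" if node: "y \<in> tau ` {..<k}" for y
  proof -
    obtain i where i: "i < k" "y = tau i"
      using node by blast
    have "poly q y = (\<Sum>l<k. poly p (tau l) * (if i = l then 1 else 0))"
      unfolding q_def poly_sum using i
      by (intro sum.cong) (auto simp: lagrange_basis_at_node[OF inj])
    then show ?thesis
      using i by (simp add: if_distrib cong: if_cong)
  qed
  have "card (tau ` {..<k}) = k"
    using inj by (simp add: card_image)
  then have "p = q"
    using deg degree_q by (intro poly_eqI_degree[OF agree]) auto
  then have "poly p x = poly q x"
    by simp
  then show ?thesis
    by (simp add: q_def poly_sum)
qed

lemma integral_poly_lagrange:
  fixes p :: "real poly"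
  assumes "inj_on tau {..<k}" and "degree p < k"
  shows "integral {a..b} (poly p)
       = (\<Sum>l<k. poly p (tau l) * integral {a..b} (lagrange_basis tau k l))"
proof -
  have integrable: "(\<lambda>x. c * lagrange_basis tau k l x) integrable_on {a..b}" for c l
  proof -
    have "continuous_on {a..b} (\<lambda>x. c * poly (lagrange_basis_poly tau k l) x)"
      by (intro continuous_intros)
    then show ?thesis
      by (simp add: integrable_continuous_interval)
  qed
  have "poly p = (\<lambda>x. \<Sum>l<k. poly p (tau l) * lagrange_basis tau k l x)"
    by (rule ext) (rule lagrange_interpolation[OF assms])
  then have "integral {a..b} (poly p)
      = integral {a..b} (\<lambda>x. \<Sum>l<k. poly p (tau l) * lagrange_basis tau k l x)"
    by (rule arg_cong)
  also have "\<dots> = (\<Sum>l<k. poly p (tau l) * integral {a..b} (lagrange_basis tau k l))"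
    using integrable by (simp add: integral_sum)
  finally show ?thesis .
qed

definition legP_poly :: "nat \<Rightarrow> real poly" where
  "legP_poly n = Polynomial.smult (sqrt (2 * real n + 1))
     (\<Sum>m\<le>n. monom ((-1) ^ (n + m) * real (n choose m) * real ((n + m) choose m)) m)"

lemma poly_legP_poly [simp]: "poly (legP_poly n) = legP n"
  unfolding legP_poly_def legP_def shifted_legendre_def fun_eq_iff
  by (simp add: poly_sum poly_monom)

lemma degree_legP_poly: "degree (legP_poly n) \<le> n"
  unfolding legP_poly_def
  by (intro order.trans[OF degree_smult_le] degree_sum_le order.trans[OF degree_monom_le]) auto

lemma coll_A_mult_P_mat:
  assumes "inj_on tau {..<k}" and "s \<le> k"
  shows "coll_A tau k * P_mat tau k s = I_mat tau k s"
proof (rule eq_matI)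
  fix i j
  assume "i < dim_row (I_mat tau k s)" and "j < dim_col (I_mat tau k s)"
  then have ij: "i < k" "j < s"
    by (auto simp: I_mat_def)
  have "degree (legP_poly j) < k"
    using degree_legP_poly[of j] ij assms(2) by linarith
  from integral_poly_lagrange[OF assms(1) this, of 0 "tau i"]
  have "integral {0..tau i} (legP j)
      = (\<Sum>l<k. integral {0..tau i} (lagrange_basis tau k l) * legP j (tau l))"
    by (simp add: mult.commute)
  then show "(coll_A tau k * P_mat tau k s) $$ (i, j) = I_mat tau k s $$ (i, j)"
    using ij by (simp add: coll_A_def P_mat_def I_mat_def scalar_prod_def lessThan_atLeast0)
qed (auto simp: coll_A_def P_mat_def I_mat_def)

theorem theorem2:
  fixes tau :: "nat \<Rightarrow> real" and k s :: nat
  assumes "1 \<le> s" and "s \<le> k"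
    and "\<forall>i<k. tau i \<in> {0..1}"
    and "inj_on tau {..<k}"
    and "\<exists>q. 2 * s - 1 \<le> q \<and>
           (\<forall>p :: real poly. degree p \<le> q \<longrightarrow>
              (\<Sum>i<k. quad_weight tau k i * poly p (tau i)) = integral {0..1} (poly p))"
  shows "coll_A tau k * P_mat tau k s * transpose_mat (P_mat tau k s) * Omega_mat tau k
       = I_mat tau k s * transpose_mat (P_mat tau k s) * Omega_mat tau k"
  using coll_A_mult_P_mat[OF assms(4) assms(2)] by simp

end
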